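(* For every integer $n\ge 2$, $$\sum_{\substack{b\ge 1,\ k\ge 0\\ 2b+k=n}} \#\mathrm{SYT}^{+k}\big((b,b)\big) = \mathrm{Cat}(n-1),$$ where $\mathrm{Cat}(m)=\frac{1}{m+1}\binom{2m}{m}$ is the $m$-th Catalan number.
   Context: For a partition $\lambda$ of $N$ (identified with its Ferrers diagram, cells in matrix coordinates $(\text{row},\text{column})$) and an integer $k\ge 0$, $\mathrm{SYT}^{+k}(\lambda)$ denotes the set of set-valued standard Young tableaux of shape $\lambda$ with entries in $[N+k]$: fillings $S$ of the cells of $\lambda$ by nonempty sets of positive integers such that (1) the sets $S(u)$ form a set partition of $[N+k]$, and (2) whenever $u\neq v$ and $u$ is weakly north and weakly west of $v$, $\max S(u)<\min S(v)$. The shape $(b,b)$ is the $2\times b$ rectangle. *)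

theory Defs
  imports Main
begin

definition is_partition :: "nat list \<Rightarrow> bool" where
  "is_partition lam \<longleftrightarrow> sorted (rev lam) \<and> (\<forall>x\<in>set lam. 0 < x)"

definition ferrers :: "nat list \<Rightarrow> (nat \<times> nat) set" where
  "ferrers lam = {(i, j). i < length lam \<and> j < lam ! i}"

text \<open>A filling is a function from cells to sets of positive integers;
it is required to be empty outside the diagram (so that the set of such
fillings is the set of fillings of the cells of lam).\<close>

definition SYT_plus :: "nat \<Rightarrow> nat list \<Rightarrow> ((nat \<times> nat) \<Rightarrow> nat set) set" where
  "SYT_plus k lam =
    {S. (\<forall>u. u \<notin> ferrers lam \<longrightarrow> S u = {})
      \<and> (\<forall>u\<in>ferrers lam. S u \<noteq> {})
      \<and> (\<Union>u\<in>ferrers lam. S u) = {1..sum_list lam + k}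
      \<and> (\<forall>u\<in>ferrers lam. \<forall>v\<in>ferrers lam. u \<noteq> v \<longrightarrow> S u \<inter> S v = {})
      \<and> (\<forall>u\<in>ferrers lam. \<forall>v\<in>ferrers lam.
            u \<noteq> v \<and> fst u \<le> fst v \<and> snd u \<le> snd v \<longrightarrow> Max (S u) < Min (S v))}"

definition catalan :: "nat \<Rightarrow> nat" where
  "catalan m = ((2 * m) choose m) div (m + 1)"

end

theory Submission
  imports Defs "HOL-Library.Product_Order"
begin

text \<open>In a set-valued tableau with entries \<open>[m+1]\<close> the entry \<open>m+1\<close> sits in a maximal
cell \<open>u\<close>; deleting it leaves a tableau of the same shape with entries \<open>[m]\<close>, or, if \<open>u\<close>
held nothing else, a tableau of the shape with \<open>u\<close> removed. For two-row shapes this gives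
a recursion in the row lengths. Summing over the shapes \<open>(c+h, c)\<close>, \<open>c \<ge> 1\<close>, gives numbers
\<open>D(m,h)\<close> with \<open>D(m+1,h) = 2D(m,h) + D(m,h-1) + D(m,h+1) + binom(m-1,h)\<close> for \<open>h > 0\<close>
(the binomial counts the one-row shapes reached from \<open>c = 1\<close>), which is solved by the
reflection-type formula \<open>D(p+2,h) = binom(2p+2,p+1-h) - binom(2p+2,p-h) - binom(p,h-1)\<close>.
At \<open>h = 0\<close> this is \<open>binom(2p+2,p+1) - binom(2p+2,p+2) = Cat(p+1)\<close>.\<close>

text \<open>Here \<open><\<close> on cells is the strict componentwise order of HOL-Library.Product_Order.\<close>

definition svt :: "(nat \<times> nat) set \<Rightarrow> nat \<Rightarrow> (nat \<times> nat \<Rightarrow> nat set) set" where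
  "svt F m = {S. (\<forall>u. u \<notin> F \<longrightarrow> S u = {}) \<and> (\<forall>u\<in>F. S u \<noteq> {}) \<and> (\<Union>u\<in>F. S u) = {1..m}
     \<and> (\<forall>u\<in>F. \<forall>v\<in>F. u \<noteq> v \<longrightarrow> S u \<inter> S v = {})
     \<and> (\<forall>u\<in>F. \<forall>v\<in>F. u < v \<longrightarrow> (\<forall>x\<in>S u. \<forall>y\<in>S v. x < y))}"

definition maximal_cells :: "(nat \<times> nat) set \<Rightarrow> (nat \<times> nat) set" where
  "maximal_cells F = {u \<in> F. \<forall>v\<in>F. \<not> u < v}"

lemma less_cell_iff: "(u :: nat \<times> nat) < v \<longleftrightarrow> u \<noteq> v \<and> fst u \<le> fst v \<and> snd u \<le> snd v"
  by (auto simp: less_le less_eq_prod_def)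

lemma SYT_plus_eq_svt: "SYT_plus k lam = svt (ferrers lam) (sum_list lam + k)"
proof -
  have "Max (S u) < Min (S v) \<longleftrightarrow> (\<forall>x\<in>S u. \<forall>y\<in>S v. x < y)"
    if "(\<Union>u\<in>ferrers lam. S u) = {1..sum_list lam + k}" "\<forall>u\<in>ferrers lam. S u \<noteq> {}"
       "u \<in> ferrers lam" "v \<in> ferrers lam" for S u v
  proof -
    have "finite (S w)" if "w \<in> ferrers lam" for w
      using that \<open>(\<Union>u\<in>ferrers lam. S u) = _\<close> by (metis UN_upper finite_atLeastAtMost finite_subset)
    then show ?thesis using that by (auto simp: Max_less_iff Min_gr_iff)
  qed
  then show ?thesis
    unfolding SYT_plus_def svt_def less_cell_iff
    by (intro Collect_cong conj_cong refl ball_cong imp_cong) auto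
qed

lemma svt_outside: "S \<in> svt F m \<Longrightarrow> u \<notin> F \<Longrightarrow> S u = {}"
  unfolding svt_def by blast

lemma svt_nonempty: "S \<in> svt F m \<Longrightarrow> u \<in> F \<Longrightarrow> S u \<noteq> {}"
  by (simp add: svt_def)

lemma svt_UN: "S \<in> svt F m \<Longrightarrow> (\<Union>u\<in>F. S u) = {1..m}"
  by (simp add: svt_def)

lemma svt_subset: "S \<in> svt F m \<Longrightarrow> S u \<subseteq> {1..m}"
  using svt_UN svt_outside by blast

lemma svt_disjoint: "S \<in> svt F m \<Longrightarrow> x \<in> S u \<Longrightarrow> x \<in> S v \<Longrightarrow> u = v"
  using svt_outside unfolding svt_def by blast

lemma svt_less: "S \<in> svt F m \<Longrightarrow> u < v \<Longrightarrow> x \<in> S u \<Longrightarrow> y \<in> S v \<Longrightarrow> x < y"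
  using svt_outside unfolding svt_def by blast

lemma svtI:
  assumes "\<And>u. u \<notin> F \<Longrightarrow> S u = {}" "\<And>u. u \<in> F \<Longrightarrow> S u \<noteq> {}" "(\<Union>u\<in>F. S u) = {1..m}"
    and "\<And>u v x. x \<in> S u \<Longrightarrow> x \<in> S v \<Longrightarrow> u = v"
    and "\<And>u v x y. u < v \<Longrightarrow> x \<in> S u \<Longrightarrow> y \<in> S v \<Longrightarrow> x < y"
  shows "S \<in> svt F m"
  using assms unfolding svt_def by blast

lemma finite_svt: "finite F \<Longrightarrow> finite (svt F m)"
proof -
  assume "finite F"
  then have "finite {S. \<forall>u. (u \<in> F \<longrightarrow> S u \<in> Pow {1..m}) \<and> (u \<notin> F \<longrightarrow> S u = {})}"
    by (intro finite_set_of_finite_funs) auto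
  moreover have "svt F m \<subseteq> {S. \<forall>u. (u \<in> F \<longrightarrow> S u \<in> Pow {1..m}) \<and> (u \<notin> F \<longrightarrow> S u = {})}"
    using svt_subset svt_outside by blast
  ultimately show ?thesis by (rule finite_subset[rotated])
qed

lemma svt_top_cell:
  assumes S: "S \<in> svt F (Suc m)" and u: "Suc m \<in> S u"
  shows "u \<in> maximal_cells F"
proof -
  have "u \<in> F" using u svt_outside[OF S] by blast
  moreover have "\<not> u < v" if "v \<in> F" for v
  proof
    assume "u < v"
    obtain y where "y \<in> S v" using svt_nonempty[OF S \<open>v \<in> F\<close>] by blast
    then show False using svt_less[OF S \<open>u < v\<close> u] svt_subset[OF S, of v] by fastforce
  qed
  ultimately show ?thesis by (simp add: maximal_cells_def)
qed

lemma svt_insert_top: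
  assumes T: "T \<in> svt F' m" and F': "F - {u} \<subseteq> F'" "F' \<subseteq> F" and u: "u \<in> maximal_cells F"
  shows "T(u := insert (Suc m) (T u)) \<in> svt F (Suc m)" (is "?S \<in> _")
proof (rule svtI)
  have "u \<in> F" using u by (simp add: maximal_cells_def)
  have "(\<Union>v\<in>F. T v) = (\<Union>v\<in>F'. T v)"
    using F' svt_outside[OF T] by blast
  then have "(\<Union>v\<in>F. ?S v) = insert (Suc m) {1..m}"
    using svt_UN[OF T] \<open>u \<in> F\<close> by auto
  then show "(\<Union>v\<in>F. ?S v) = {1..Suc m}"
    by (simp add: atLeastAtMostSuc_conv)
  show "?S v = {}" if "v \<notin> F" for v
  proof -
    have "v \<noteq> u" "v \<notin> F'" using that \<open>u \<in> F\<close> F' by auto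
    then show ?thesis by (simp add: svt_outside[OF T])
  qed
  show "?S v \<noteq> {}" if "v \<in> F" for v
    using that F' svt_nonempty[OF T, of v] by auto
  have small: "x \<le> m" if "x \<in> T v" for v x
    using svt_subset[OF T, of v] that by auto
  show "v = w" if "x \<in> ?S v" "x \<in> ?S w" for v w x
    using that by (cases "v = u"; cases "w = u") (auto dest: small svt_disjoint[OF T])
  show "x < y" if "v < w" "x \<in> ?S v" "y \<in> ?S w" for v w x y
  proof -
    have "v \<noteq> u"
    proof
      assume "v = u"
      with that have "y \<in> T w" by (auto split: if_splits)
      then have "w \<in> F" using svt_outside[OF T, of w] F' by auto
      with u \<open>v < w\<close> \<open>v = u\<close> show False by (simp add: maximal_cells_def)
    qed
    then show ?thesis
      using that by (cases "w = u") (auto dest: small svt_less[OF T])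
  qed
qed

lemma svt_remove_top:
  assumes S: "S \<in> svt F (Suc m)" and u: "Suc m \<in> S u"
  shows "S(u := S u - {Suc m}) \<in> svt (if S u = {Suc m} then F - {u} else F) m" (is "?T \<in> svt ?F m")
proof (rule svtI)
  have "u \<in> F" using u svt_outside[OF S] by blast
  have only_u: "Suc m \<in> S v \<Longrightarrow> v = u" for v
    using svt_disjoint[OF S u] by blast
  have "(\<Union>v\<in>?F. ?T v) = (\<Union>v\<in>F. S v) - {Suc m}"
    using only_u \<open>u \<in> F\<close> by auto
  then show "(\<Union>v\<in>?F. ?T v) = {1..m}"
    using svt_UN[OF S] by auto
  show "?T v = {}" if "v \<notin> ?F" for v
  proof (cases "v = u")
    case False
    with that have "v \<notin> F" by (auto split: if_splits)
    with False show ?thesis by (simp add: svt_outside[OF S])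
  qed (use that \<open>u \<in> F\<close> in \<open>auto split: if_splits\<close>)
  show "?T v \<noteq> {}" if "v \<in> ?F" for v
    using that svt_nonempty[OF S] u by (auto split: if_splits)
  show "v = w" if "x \<in> ?T v" "x \<in> ?T w" for v w x
    using that svt_disjoint[OF S] by (auto split: if_splits)
  show "x < y" if "v < w" "x \<in> ?T v" "y \<in> ?T w" for v w x y
    using that svt_less[OF S] by (auto split: if_splits)
qed

lemma card_svt_top_at:
  assumes F: "finite F" and u: "u \<in> maximal_cells F"
  shows "card {S \<in> svt F (Suc m). Suc m \<in> S u} = card (svt F m) + card (svt (F - {u}) m)"
proof -
  define ins where "ins T = T(u := insert (Suc m) (T u))" for T :: "nat \<times> nat \<Rightarrow> nat set"
  define del where "del S = S(u := S u - {Suc m})" for S :: "nat \<times> nat \<Rightarrow> nat set"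
  have "u \<in> F" using u by (simp add: maximal_cells_def)
  have del_ins: "del (ins T) = T" if "T \<in> svt F m \<union> svt (F - {u}) m" for T
  proof -
    have "Suc m \<notin> T u" using that by (auto dest!: svt_subset[where u = u])
    then show ?thesis by (simp add: del_def ins_def fun_eq_iff)
  qed
  have "{S \<in> svt F (Suc m). Suc m \<in> S u} = ins ` (svt F m \<union> svt (F - {u}) m)"
  proof (intro equalityI subsetI)
    fix S assume "S \<in> {S \<in> svt F (Suc m). Suc m \<in> S u}"
    then have S: "S \<in> svt F (Suc m)" "Suc m \<in> S u" by auto
    have "S = ins (del S)"
      using S(2) by (simp add: ins_def del_def insert_absorb)
    moreover have "del S \<in> svt F m \<union> svt (F - {u}) m"
      using svt_remove_top[OF S] by (auto simp: del_def split: if_splits)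
    ultimately show "S \<in> ins ` (svt F m \<union> svt (F - {u}) m)" by blast
  next
    fix S assume "S \<in> ins ` (svt F m \<union> svt (F - {u}) m)"
    then obtain T where T: "T \<in> svt F m \<or> T \<in> svt (F - {u}) m" and S: "S = ins T" by auto
    have "S \<in> svt F (Suc m)"
      using T svt_insert_top[of T F m F u] svt_insert_top[of T "F - {u}" m F u] u
      unfolding S ins_def by blast
    then show "S \<in> {S \<in> svt F (Suc m). Suc m \<in> S u}" by (simp add: S ins_def)
  qed
  moreover have "inj_on ins (svt F m \<union> svt (F - {u}) m)"
    by (rule inj_on_inverseI[where g = del]) (rule del_ins)
  moreover have "svt F m \<inter> svt (F - {u}) m = {}"
    using \<open>u \<in> F\<close> svt_nonempty[of _ F m u] svt_outside[of _ "F - {u}" m u] by blast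
  ultimately show ?thesis
    using F by (simp add: card_image card_Un_disjoint finite_svt)
qed

lemma card_svt_Suc:
  assumes F: "finite F"
  shows "card (svt F (Suc m)) = (\<Sum>u\<in>maximal_cells F. card (svt F m) + card (svt (F - {u}) m))"
proof -
  let ?top = "\<lambda>u. {S \<in> svt F (Suc m). Suc m \<in> S u}"
  have "svt F (Suc m) = (\<Union>u\<in>maximal_cells F. ?top u)"
  proof (intro equalityI subsetI)
    fix S assume S: "S \<in> svt F (Suc m)"
    have "Suc m \<in> (\<Union>u\<in>F. S u)" using svt_UN[OF S] by simp
    then obtain u where "Suc m \<in> S u" by blast
    then show "S \<in> (\<Union>u\<in>maximal_cells F. ?top u)"
      using S svt_top_cell by blast
  qed auto
  moreover have "card (\<Union>u\<in>maximal_cells F. ?top u) = (\<Sum>u\<in>maximal_cells F. card (?top u))"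
  proof (rule card_UN_disjoint)
    show "finite (maximal_cells F)"
      using F by (simp add: maximal_cells_def)
    show "\<forall>u\<in>maximal_cells F. finite (?top u)"
      using finite_svt[OF F] by simp
    show "\<forall>u\<in>maximal_cells F. \<forall>v\<in>maximal_cells F. u \<noteq> v \<longrightarrow> ?top u \<inter> ?top v = {}"
      using svt_disjoint by blast
  qed
  ultimately show ?thesis
    using F by (simp add: card_svt_top_at)
qed

lemma card_svt_0: "card (svt F 0) = (if F = {} then 1 else 0)"
proof (cases "F = {}")
  case True
  have "svt {} 0 = {\<lambda>_. {}}"
    by (auto intro!: svtI simp: svt_outside)
  with True show ?thesis by simp
next
  case False
  have "svt F 0 = {}"
    using False svt_nonempty svt_subset by fastforce
  with False show ?thesis by simp
qed

lemma finite_ferrers: "finite (ferrers lam)"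
proof -
  have "ferrers lam = (\<Union>i<length lam. {i} \<times> {..<lam ! i})"
    by (auto simp: ferrers_def)
  then show ?thesis by simp
qed

lemma maximal_cells_down_closed:
  assumes down: "\<And>u v. v \<in> F \<Longrightarrow> u \<le> v \<Longrightarrow> u \<in> F"
  shows "u \<in> maximal_cells F \<longleftrightarrow> u \<in> F \<and> (fst u, Suc (snd u)) \<notin> F \<and> (Suc (fst u), snd u) \<notin> F"
proof -
  have "(fst u, Suc (snd u)) \<in> F \<or> (Suc (fst u), snd u) \<in> F" if "v \<in> F" "u < v" for v
  proof (cases "fst u = fst v")
    case True
    with that have "(fst u, Suc (snd u)) \<le> v" by (auto simp: less_cell_iff less_eq_prod_def prod_eq_iff)
    with that show ?thesis using down by blast
  next
    case False
    with that have "(Suc (fst u), snd u) \<le> v" by (auto simp: less_cell_iff less_eq_prod_def)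
    with that show ?thesis using down by blast
  qed
  moreover have "u < (fst u, Suc (snd u))" "u < (Suc (fst u), snd u)"
    by (cases u; simp add: less_cell_iff)+
  ultimately show ?thesis
    unfolding maximal_cells_def by blast
qed

lemma mem_ferrers_two_row: "(i, j) \<in> ferrers [a, c] \<longleftrightarrow> (i = 0 \<and> j < a) \<or> (i = 1 \<and> j < c)"
  by (auto simp: ferrers_def less_2_cases_iff nth_Cons split: nat.splits)

lemma maximal_cells_two_row:
  assumes "c \<le> a"
  shows "maximal_cells (ferrers [a, c])
    = (if 0 < c then {(1, c - 1)} else {}) \<union> (if c < a then {(0, a - 1)} else {})"
proof -
  have "v \<in> ferrers [a, c] \<Longrightarrow> u \<le> v \<Longrightarrow> u \<in> ferrers [a, c]" for u v
    using assms by (cases u; cases v) (auto simp: mem_ferrers_two_row)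
  note maximal = maximal_cells_down_closed[where F = "ferrers [a, c]", OF this]
  show ?thesis
  proof (rule set_eqI)
    fix u :: "nat \<times> nat"
    show "u \<in> maximal_cells (ferrers [a, c]) \<longleftrightarrow>
      u \<in> (if 0 < c then {(1, c - 1)} else {}) \<union> (if c < a then {(0, a - 1)} else {})"
      using assms maximal[where u = u] by (cases u) (auto simp: mem_ferrers_two_row)
  qed
qed

lemma ferrers_two_row_remove_second:
  "0 < c \<Longrightarrow> ferrers [a, c] - {(1, c - 1)} = ferrers [a, c - 1]"
  by (auto simp: mem_ferrers_two_row)

lemma ferrers_two_row_remove_first:
  "c < a \<Longrightarrow> ferrers [a, c] - {(0, a - 1)} = ferrers [a - 1, c]"
  by (auto simp: mem_ferrers_two_row)

text \<open>The values for \<open>c > a\<close> are junk: they are not tableau counts.\<close>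

fun two_row_count :: "nat \<Rightarrow> nat \<Rightarrow> nat \<Rightarrow> nat" where
  "two_row_count a c 0 = (if a = 0 \<and> c = 0 then 1 else 0)"
| "two_row_count a c (Suc m) =
     (if c < a then two_row_count a c m + two_row_count (a - 1) c m else 0)
   + (if 0 < c then two_row_count a c m + two_row_count a (c - 1) m else 0)"

lemma card_svt_two_row: "c \<le> a \<Longrightarrow> card (svt (ferrers [a, c]) m) = two_row_count a c m"
proof (induction m arbitrary: a c)
  case 0
  have "ferrers [a, c] = {} \<longleftrightarrow> a = 0 \<and> c = 0"
  proof
    assume "ferrers [a, c] = {}"
    then have "(0, 0) \<notin> ferrers [a, c]" by simp
    then show "a = 0 \<and> c = 0" using 0 by (simp add: mem_ferrers_two_row)
  qed (auto simp: mem_ferrers_two_row)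
  then show ?case by (simp add: card_svt_0)
next
  case (Suc m)
  let ?F = "ferrers [a, c]"
  let ?f = "\<lambda>u. card (svt ?F m) + card (svt (?F - {u}) m)"
  have "card (svt ?F (Suc m))
      = (\<Sum>u \<in> (if 0 < c then {(1, c - 1)} else {}) \<union> (if c < a then {(0, a - 1)} else {}). ?f u)"
    using Suc.prems by (simp add: card_svt_Suc finite_ferrers maximal_cells_two_row)
  also have "\<dots> = (if c < a then ?f (0, a - 1) else 0) + (if 0 < c then ?f (1, c - 1) else 0)"
    by (auto simp: sum.union_disjoint)
  also have "\<dots> = two_row_count a c (Suc m)"
  proof -
    have "card (svt ?F m) = two_row_count a c m"
      using Suc by simp
    moreover have "c < a \<Longrightarrow> card (svt (?F - {(0, a - 1)}) m) = two_row_count (a - 1) c m"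
      using Suc.IH[of c "a - 1"] ferrers_two_row_remove_first[of c a] by simp
    moreover have "0 < c \<Longrightarrow> card (svt (?F - {(1, c - 1)}) m) = two_row_count a (c - 1) m"
      using Suc ferrers_two_row_remove_second[of c a] by simp
    ultimately show ?thesis by (cases "0 < c"; cases "c < a") simp_all
  qed
  finally show ?case .
qed

lemma two_row_count_eq_0: "m < a + c \<Longrightarrow> two_row_count a c m = 0"
  by (induction m arbitrary: a c) auto

lemma two_row_count_one_row: "two_row_count (Suc h) 0 (Suc m) = m choose h"
proof (induction m arbitrary: h)
  case 0
  then show ?case by (cases h) auto
next
  case (Suc m)
  then show ?case by (cases h) auto
qed

definition diff_count :: "nat \<Rightarrow> nat \<Rightarrow> nat" where
  "diff_count m h = (\<Sum>c = 1..m. two_row_count (c + h) c m)"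

lemma diff_count_Suc:
  "diff_count (Suc m) h =
     (if 0 < h then 2 * diff_count m h + diff_count m (h - 1) else diff_count m h)
     + two_row_count (Suc h) 0 m + diff_count m (Suc h)"
proof -
  have extend: "(\<Sum>c = 1..Suc m. two_row_count (c + h') c m) = diff_count m h'" for h'
    unfolding diff_count_def by (simp add: two_row_count_eq_0)
  have step: "two_row_count (c + h) c (Suc m) =
      (if 0 < h then 2 * two_row_count (c + h) c m + two_row_count (c + (h - 1)) c m
       else two_row_count (c + h) c m)
      + two_row_count (Suc (c - 1) + h) (c - 1) m" if "1 \<le> c" for c
    using that by (cases c) auto
  have "diff_count (Suc m) h =
      (\<Sum>c = 1..Suc m. (if 0 < h then 2 * two_row_count (c + h) c m + two_row_count (c + (h - 1)) c m
       else two_row_count (c + h) c m) + two_row_count (Suc (c - 1) + h) (c - 1) m)"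
    unfolding diff_count_def by (rule sum.cong) (simp_all add: step)
  also have "\<dots> =
      (if 0 < h then 2 * diff_count m h + diff_count m (h - 1) else diff_count m h)
      + (\<Sum>c = 1..Suc m. two_row_count (Suc (c - 1) + h) (c - 1) m)"
    by (simp add: sum.distrib sum_distrib_left flip: extend)
  also have "(\<Sum>c = 1..Suc m. two_row_count (Suc (c - 1) + h) (c - 1) m)
      = (\<Sum>c = 0..m. two_row_count (c + Suc h) c m)"
    using sum.shift_bounds_cl_Suc_ivl[of "\<lambda>c. two_row_count (Suc (c - 1) + h) (c - 1) m" 0 m]
    by simp
  also have "\<dots> = two_row_count (Suc h) 0 m + diff_count m (Suc h)"
    unfolding diff_count_def by (simp add: sum.atLeast_Suc_atMost)
  finally show ?thesis by (simp only: add.assoc)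
qed

definition ibinom :: "nat \<Rightarrow> int \<Rightarrow> int" where
  "ibinom n k = (if k < 0 then 0 else int (n choose nat k))"

lemma ibinom_Suc: "ibinom (Suc n) k = ibinom n (k - 1) + ibinom n k"
proof (cases "k \<le> 0")
  case False
  then have "nat k = Suc (nat (k - 1))" by simp
  with False show ?thesis by (simp add: ibinom_def)
qed (auto simp: ibinom_def)

lemma ibinom_Suc_Suc: "ibinom (Suc (Suc n)) k = ibinom n (k - 2) + 2 * ibinom n (k - 1) + ibinom n k"
  by (simp add: ibinom_Suc algebra_simps)

lemma ibinom_symmetric: "ibinom n k = ibinom n (int n - k)"
proof (cases "0 \<le> k \<and> k \<le> int n")
  case True
  then have "nat k \<le> n" "nat (int n - k) = n - nat k" by linarith+
  with True show ?thesis
    by (simp add: ibinom_def binomial_symmetric[of "nat k" n])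
qed (auto simp: ibinom_def)

definition diff_count_formula :: "nat \<Rightarrow> int \<Rightarrow> int" where
  "diff_count_formula p h =
     ibinom (2 * p + 2) (int p + 1 - h) - ibinom (2 * p + 2) (int p - h) - ibinom p (h - 1)"

lemma diff_count_formula_Suc:
  "diff_count_formula (Suc p) h = 2 * diff_count_formula p h + diff_count_formula p (h - 1)
     + diff_count_formula p (h + 1) + ibinom (Suc p) h"
proof -
  have "2 * Suc p + 2 = Suc (Suc (2 * p + 2))" by simp
  then show ?thesis
    unfolding diff_count_formula_def
    by (simp only: ibinom_Suc_Suc ibinom_Suc) (simp add: algebra_simps)
qed

lemma diff_count_formula_minus_one: "diff_count_formula p (-1) = - diff_count_formula p 0"
proof -
  have "ibinom (2 * p + 2) (int p + 1 - (-1)) = ibinom (2 * p + 2) (int p - 0)"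
    using ibinom_symmetric[of "2 * p + 2" "int p + 2"] by (simp add: ac_simps)
  then show ?thesis
    by (simp add: diff_count_formula_def ibinom_def)
qed

lemma diff_count_closed: "int (diff_count (p + 2) h) = diff_count_formula p (int h)"
proof (induction p arbitrary: h)
  case 0
  have "diff_count (0 + 2) h = (if h = 0 then 1 else 0)"
    by (cases h) (auto simp: diff_count_def numeral_2_eq_2 two_row_count_eq_0)
  moreover have "diff_count_formula 0 (int h) = (if h = 0 then 1 else 0)"
    by (cases "h = 0"; cases "h = 1") (auto simp: diff_count_formula_def ibinom_def)
  ultimately show ?case by simp
next
  case (Suc p)
  have rec: "diff_count (Suc p + 2) h =
      (if 0 < h then 2 * diff_count (p + 2) h + diff_count (p + 2) (h - 1) else diff_count (p + 2) h)
      + (Suc p choose h) + diff_count (p + 2) (Suc h)"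
    using diff_count_Suc[of "p + 2" h] two_row_count_one_row[of h "Suc p"]
    by (simp del: two_row_count.simps)
  have choose: "int (Suc p choose h) = ibinom (Suc p) (int h)"
    by (simp add: ibinom_def)
  show ?case
  proof (cases "h = 0")
    case True
    have "int (diff_count (Suc p + 2) 0) = diff_count_formula p 0 + 1 + diff_count_formula p 1"
      using rec True Suc.IH[of 0] Suc.IH[of 1] by simp
    moreover have "ibinom (Suc p) 0 = 1"
      by (simp add: ibinom_def)
    ultimately show ?thesis
      using True diff_count_formula_Suc[of p 0] diff_count_formula_minus_one[of p] by simp
  next
    case False
    then have "int (h - 1) = int h - 1" by simp
    have "int (diff_count (Suc p + 2) h) = 2 * diff_count_formula p (int h)
        + diff_count_formula p (int h - 1) + ibinom (Suc p) (int h) + diff_count_formula p (int h + 1)"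
      using rec choose Suc.IH[of h] Suc.IH[of "h - 1"] Suc.IH[of "Suc h"] False \<open>int (h - 1) = _\<close>
      by (simp add: ac_simps)
    then show ?thesis
      using diff_count_formula_Suc[of p "int h"] by linarith
  qed
qed

lemma catalan_eq_binomial_diff: "int (catalan m) = int (2 * m choose m) - int (2 * m choose Suc m)"
proof -
  define C D where "C = 2 * m choose m" and "D = 2 * m choose Suc m"
  have "Suc m * D = (2 * m - m) * C"
    unfolding C_def D_def by (simp only: binomial_absorption binomial_absorb_comp)
  then have "int (Suc m) * int D = int m * int C"
    by (metis of_nat_mult diff_add_inverse2 mult_2)
  then have C: "int C = int (Suc m) * (int C - int D)"
    by (simp add: algebra_simps)
  have "int (catalan m) = int C div int (Suc m)"
    by (simp add: catalan_def C_def zdiv_int)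
  also have "\<dots> = int (Suc m) * (int C - int D) div int (Suc m)"
    by (subst C) (rule refl)
  also have "\<dots> = int C - int D"
    by simp
  finally show ?thesis
    by (simp add: C_def D_def)
qed

lemma diff_count_zero_eq_catalan: "diff_count (p + 2) 0 = catalan (Suc p)"
proof -
  have "int (diff_count (p + 2) 0) = ibinom (2 * p + 2) (int p + 1) - ibinom (2 * p + 2) (int p)"
    using diff_count_closed[of p 0] by (simp add: diff_count_formula_def ibinom_def)
  also have "ibinom (2 * p + 2) (int p) = ibinom (2 * p + 2) (int p + 2)"
    using ibinom_symmetric[of "2 * p + 2" "int p"] by simp
  also have "ibinom (2 * p + 2) (int p + 1) - \<dots> = int (catalan (Suc p))"
  proof -
    have "nat (int p + 1) = Suc p" "nat (int p + 2) = Suc (Suc p)" "2 * p + 2 = 2 * Suc p" by simp_all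
    then show ?thesis
      unfolding catalan_eq_binomial_diff by (simp add: ibinom_def)
  qed
  finally show ?thesis by simp
qed

lemma card_SYT_plus_two_row: "c \<le> a \<Longrightarrow> card (SYT_plus k [a, c]) = two_row_count a c (a + c + k)"
  by (simp add: SYT_plus_eq_svt card_svt_two_row)

lemma sum_card_SYT_plus_square:
  "(\<Sum>(b, k) \<in> {(b, k). b \<ge> 1 \<and> 2 * b + k = n}. card (SYT_plus k [b, b])) = diff_count n 0"
proof -
  have "(\<Sum>(b, k) \<in> {(b, k). b \<ge> 1 \<and> 2 * b + k = n}. card (SYT_plus k [b, b]))
      = (\<Sum>b \<in> {b. 1 \<le> b \<and> 2 * b \<le> n}. two_row_count b b n)"
    by (rule sum.reindex_cong[where l = "\<lambda>b. (b, n - 2 * b)"])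
      (auto simp: inj_on_def image_iff card_SYT_plus_two_row)
  also have "\<dots> = (\<Sum>b = 1..n. two_row_count b b n)"
    by (rule sum.mono_neutral_left) (auto intro!: two_row_count_eq_0)
  finally show ?thesis
    by (simp add: diff_count_def)
qed

theorem mainTheorem1:
  fixes n :: nat
  assumes "n \<ge> 2"
  shows "(\<Sum>(b, k) \<in> {(b, k). b \<ge> 1 \<and> 2 * b + k = n}. card (SYT_plus k [b, b]))
         = catalan (n - 1)"
proof -
  obtain p where "n = p + 2"
    using assms by (metis add.commute le_Suc_ex)
  then show ?thesis
    using sum_card_SYT_plus_square[of n] diff_count_zero_eq_catalan[of p] by simp
qed

end
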